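(* Fix $c > 0$ and $p \in (0,1)$. For $x^{\text{obs}} > c$ let $\theta_{\text{2-sided}}(p)$ denote the unique $\theta \in \mathbb{R}$ solving $F_{\text{2-sided}}(x^{\text{obs}},\theta,c) = p$. Then as $x^{\text{obs}} \downarrow c$, $\theta_{\text{2-sided}}(p)$ converges to a finite limit, namely the unique $\theta \in \mathbb{R}$ solving $$p = \frac{\Phi(-c-\theta)}{\Phi(-c-\theta) + \Phi(-c+\theta)}.$$ In particular, for $p = 0.5$ the limit is $0$, i.e. the conditionally median-unbiased estimator $\theta_{\text{2-sided}}(0.5) \to 0$ as $x^{\text{obs}} \downarrow c$.
   Context: Let $\Phi$ denote the standard normal distribution function and let $c>0$. For $X \sim N(\theta,1)$, the distribution function of $X$ conditional on $|X| \ge c$ is $$F_{\text{2-sided}}(a,\theta,c) = \Pr(X \le a \mid |X| \ge c) = \frac{\min\big(\Phi(a-\theta), \Phi(-c-\theta)\big) + \mathbf{1}_{a > c}\big(\Phi(a-\theta) - \Phi(c-\theta)\big)}{\Phi(-c-\theta) + \Phi(-c+\theta)},$$ where $\mathbf{1}_{a>c}$ equals $1$ if $a > c$ and $0$ otherwise. For $x^{\text{obs}} > c$ the map $\theta \mapsto F_{\text{2-sided}}(x^{\text{obs}},\theta,c)$ is assumed (as in the paper) to be a continuous strictly decreasing bijection from $\mathbb{R}$ onto $(0,1)$, so that $\theta_{\text{2-sided}}(p)$ is well defined. *)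

theory Defs
  imports "HOL-Probability.Probability"
begin

definition Phi :: "real \<Rightarrow> real" where
  "Phi x = (LBINT t:{..x}. std_normal_density t)"

text \<open>Distribution function of X ~ N(theta,1) conditional on |X| >= c.\<close>
definition F2sided :: "real \<Rightarrow> real \<Rightarrow> real \<Rightarrow> real" where
  "F2sided a \<theta> c =
     (min (Phi (a - \<theta>)) (Phi (-c - \<theta>))
        + (if a > c then Phi (a - \<theta>) - Phi (c - \<theta>) else 0))
     / (Phi (-c - \<theta>) + Phi (-c + \<theta>))"

definition theta2sided :: "real \<Rightarrow> real \<Rightarrow> real \<Rightarrow> real" where
  "theta2sided xobs c p = (THE \<theta>. F2sided xobs \<theta> c = p)"

end

theory Submission
  imports Defs "HOL-Real_Asymp.Real_Asymp"
begin

text \<open>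
  For \<open>xobs > c > 0\<close> the minimum in \<open>F2sided xobs \<theta> c\<close> is \<open>\<Phi>(-c-\<theta>)\<close>, so as
  \<open>xobs \<down> c\<close> these functions of \<open>\<theta>\<close> converge pointwise to
  \<open>G(\<theta>) = \<Phi>(-c-\<theta>) / (\<Phi>(-c-\<theta>) + \<Phi>(-c+\<theta>))\<close>.  \<open>G\<close> is continuous and strictly
  decreasing from 1 to 0, so \<open>G(\<theta>) = p\<close> has a unique root \<open>\<theta>\<^sub>0\<close>, and \<open>G(0) = 1/2\<close>
  by symmetry.  Pointwise convergence of decreasing functions to a strictly decreasing limit
  forces convergence of their roots: eventually
  \<open>F2sided xobs (\<theta>\<^sub>0 + \<epsilon>) c < p < F2sided xobs (\<theta>\<^sub>0 - \<epsilon>) c\<close>, which traps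
  \<open>theta2sided xobs c p\<close> in \<open>(\<theta>\<^sub>0 - \<epsilon>, \<theta>\<^sub>0 + \<epsilon>)\<close>.
\<close>

lemma tendsto_root_of_pointwise_convergence:
  fixes f :: "'a \<Rightarrow> real \<Rightarrow> real" and g :: "real \<Rightarrow> real"
  assumes antimono: "eventually (\<lambda>x. antimono (f x)) F"
    and root: "eventually (\<lambda>x. f x (r x) = p) F"
    and pointwise: "\<And>t. ((\<lambda>x. f x t) \<longlongrightarrow> g t) F"
    and g_decreasing: "\<And>s t. s < t \<Longrightarrow> g t < g s"
    and g_root: "g t\<^sub>0 = p"
  shows "(r \<longlongrightarrow> t\<^sub>0) F"
proof (rule tendstoI)
  fix e :: real assume "e > 0"
  then have "g (t\<^sub>0 + e) < p" "p < g (t\<^sub>0 - e)"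
    using g_decreasing[of t\<^sub>0 "t\<^sub>0 + e"] g_decreasing[of "t\<^sub>0 - e" t\<^sub>0] g_root by auto
  then have "eventually (\<lambda>x. f x (t\<^sub>0 + e) < p) F" "eventually (\<lambda>x. p < f x (t\<^sub>0 - e)) F"
    using order_tendstoD[OF pointwise] by auto
  with antimono root show "eventually (\<lambda>x. dist (r x) t\<^sub>0 < e) F"
  proof eventually_elim
    case (elim x)
    have "r x < t\<^sub>0 + e"
      using antimonoD[OF elim(1), of "t\<^sub>0 + e" "r x"] elim(2,3) by (cases "r x < t\<^sub>0 + e") auto
    moreover have "t\<^sub>0 - e < r x"
      using antimonoD[OF elim(1), of "r x" "t\<^sub>0 - e"] elim(2,4) by (cases "t\<^sub>0 - e < r x") auto
    ultimately show ?case
      by (simp add: dist_real_def abs_less_iff)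
  qed
qed

lemma the_root_of_strictly_decreasing:
  fixes f :: "real \<Rightarrow> real"
  assumes "\<And>s t. s < t \<Longrightarrow> f t < f s" and "p \<in> range f"
  shows "f (THE t. f t = p) = p"
proof -
  have "inj f"
    using assms(1) by (intro injI) (metis less_irrefl linorder_neqE)
  with assms(2) have "\<exists>!t. f t = p"
    by (auto dest: injD)
  then show ?thesis
    by (rule theI')
qed

interpretation std_normal: real_distribution std_normal_distribution
  by (rule real_dist_normal_dist)

lemma measure_std_normal_distribution:
  assumes [measurable]: "A \<in> sets borel"
  shows "measure std_normal_distribution A = (LBINT t:A. std_normal_density t)"
proof -
  have "emeasure std_normal_distribution A
      = (\<integral>\<^sup>+x. ennreal (std_normal_density x) * indicator A x \<partial>lborel)"
    by (rule emeasure_density) auto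
  also have "\<dots> = ennreal (LBINT t:A. std_normal_density t)"
    by (rule nn_set_integral_eq_set_integral) auto
  finally show ?thesis
    unfolding measure_def set_lebesgue_integral_def by (simp add: integral_nonneg)
qed

lemma Phi_eq_cdf: "Phi = cdf std_normal_distribution"
  by (rule ext) (simp add: Phi_def cdf_def measure_std_normal_distribution)

lemma Phi_at_bot: "(Phi \<longlongrightarrow> 0) at_bot"
  unfolding Phi_eq_cdf by (rule std_normal.cdf_lim_at_bot)

lemma Phi_at_top: "(Phi \<longlongrightarrow> 1) at_top"
  unfolding Phi_eq_cdf by (rule std_normal.cdf_lim_at_top_prob)

lemma null_sets_std_normal_distribution:
  "A \<in> null_sets std_normal_distribution \<longleftrightarrow> A \<in> null_sets lborel"
proof -
  have "\<And>x. std_normal_density x \<noteq> 0"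
    using normal_density_pos[of 1] by (metis less_irrefl zero_less_one)
  then have "A \<in> null_sets std_normal_distribution \<longleftrightarrow> A \<in> sets lborel \<and> (AE x in lborel. x \<notin> A)"
    by (subst null_sets_density_iff) auto
  then show ?thesis
    using AE_iff_null_sets by blast
qed

lemma measure_std_normal_distribution_eq_0_iff:
  assumes "A \<in> sets borel"
  shows "measure std_normal_distribution A = 0 \<longleftrightarrow> A \<in> null_sets lborel"
proof -
  have "measure std_normal_distribution A = 0 \<longleftrightarrow> A \<in> null_sets std_normal_distribution"
    using assms by (simp add: null_sets_def std_normal.emeasure_eq_measure)
  then show ?thesis
    by (simp add: null_sets_std_normal_distribution)
qed

lemma isCont_Phi: "isCont Phi x"
  unfolding Phi_eq_cdf
  by (simp add: std_normal.isCont_cdf measure_std_normal_distribution_eq_0_iff null_sets_def)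

lemma Phi_strict_mono:
  assumes "x < y"
  shows "Phi x < Phi y"
proof -
  have "0 < measure std_normal_distribution {x<..y}"
    using assms
    by (simp add: zero_less_measure_iff measure_std_normal_distribution_eq_0_iff null_sets_def)
  then show ?thesis
    unfolding Phi_eq_cdf using std_normal.cdf_diff_eq[OF assms] by simp
qed

lemma Phi_pos: "0 < Phi x"
  using Phi_strict_mono[of "x - 1" x] std_normal.cdf_nonneg[of "x - 1"]
  unfolding Phi_eq_cdf by simp

text \<open>For \<open>c > 0\<close> this is \<open>F2sided c \<theta> c\<close>, the conditional distribution function at the truncation point.\<close>

definition F2sided_limit :: "real \<Rightarrow> real \<Rightarrow> real" where
  "F2sided_limit c \<theta> = Phi (-c - \<theta>) / (Phi (-c - \<theta>) + Phi (-c + \<theta>))"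

lemma F2sided_limit_strict_antimono:
  assumes "s < t"
  shows "F2sided_limit c t < F2sided_limit c s"
proof -
  have "Phi (-c - t) * Phi (-c + s) < Phi (-c - s) * Phi (-c + t)"
    using assms by (intro mult_strict_mono Phi_strict_mono) (auto intro: Phi_pos less_imp_le)
  then show ?thesis
    unfolding F2sided_limit_def
    using Phi_pos[of "-c - s"] Phi_pos[of "-c + s"] Phi_pos[of "-c - t"] Phi_pos[of "-c + t"]
    by (simp add: divide_simps algebra_simps)
qed

lemma isCont_F2sided_limit: "isCont (F2sided_limit c) \<theta>"
  unfolding F2sided_limit_def
  using Phi_pos[of "-c - \<theta>"] Phi_pos[of "-c + \<theta>"]
  by (intro continuous_intros isCont_o2[OF _ isCont_Phi]) auto

lemma F2sided_limit_at_top: "(F2sided_limit c \<longlongrightarrow> 0) at_top"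
proof -
  have "((\<lambda>\<theta>. Phi (-c - \<theta>)) \<longlongrightarrow> 0) at_top" "((\<lambda>\<theta>. Phi (-c + \<theta>)) \<longlongrightarrow> 1) at_top"
    by (rule filterlim_compose[OF Phi_at_bot], real_asymp)
       (rule filterlim_compose[OF Phi_at_top], real_asymp)
  then have "(F2sided_limit c \<longlongrightarrow> 0 / (0 + 1)) at_top"
    unfolding F2sided_limit_def by (intro tendsto_intros) auto
  then show ?thesis by simp
qed

lemma F2sided_limit_at_bot: "(F2sided_limit c \<longlongrightarrow> 1) at_bot"
proof -
  have "((\<lambda>\<theta>. Phi (-c - \<theta>)) \<longlongrightarrow> 1) at_bot" "((\<lambda>\<theta>. Phi (-c + \<theta>)) \<longlongrightarrow> 0) at_bot"
    by (rule filterlim_compose[OF Phi_at_top], real_asymp)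
       (rule filterlim_compose[OF Phi_at_bot], real_asymp)
  then have "(F2sided_limit c \<longlongrightarrow> 1 / (1 + 0)) at_bot"
    unfolding F2sided_limit_def by (intro tendsto_intros) auto
  then show ?thesis by simp
qed

lemma F2sided_limit_root_exists:
  assumes "0 < p" "p < 1"
  obtains \<theta> where "F2sided_limit c \<theta> = p"
proof -
  obtain a where a: "\<And>\<theta>. \<theta> \<le> a \<Longrightarrow> p < F2sided_limit c \<theta>"
    using order_tendstoD(1)[OF F2sided_limit_at_bot \<open>p < 1\<close>]
    by (auto simp: eventually_at_bot_linorder)
  obtain b where b: "\<And>\<theta>. b \<le> \<theta> \<Longrightarrow> F2sided_limit c \<theta> < p"
    using order_tendstoD(2)[OF F2sided_limit_at_top \<open>0 < p\<close>]
    by (auto simp: eventually_at_top_linorder)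
  have "a \<le> b"
    using a[of a] b[of b] F2sided_limit_strict_antimono[of b a c] by fastforce
  then show ?thesis
    using IVT2[of "F2sided_limit c" b p a] a[of a] b[of b] isCont_F2sided_limit that by force
qed

lemma F2sided_limit_zero: "F2sided_limit c 0 = 1/2"
  unfolding F2sided_limit_def using Phi_pos[of "-c"] by simp

lemma F2sided_above_c:
  assumes "0 < c" "c < x"
  shows "F2sided x \<theta> c
    = (Phi (-c - \<theta>) + (Phi (x - \<theta>) - Phi (c - \<theta>))) / (Phi (-c - \<theta>) + Phi (-c + \<theta>))"
  using assms Phi_strict_mono[of "-c - \<theta>" "x - \<theta>"] unfolding F2sided_def by (simp add: min_def)

lemma F2sided_tendsto_F2sided_limit:
  assumes "0 < c"
  shows "((\<lambda>x. F2sided x \<theta> c) \<longlongrightarrow> F2sided_limit c \<theta>) (at_right c)"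
proof -
  define h where
    "h x = (Phi (-c - \<theta>) + (Phi (x - \<theta>) - Phi (c - \<theta>))) / (Phi (-c - \<theta>) + Phi (-c + \<theta>))" for x
  have "isCont h c"
    unfolding h_def using Phi_pos[of "-c - \<theta>"] Phi_pos[of "-c + \<theta>"]
    by (intro continuous_intros isCont_o2[OF _ isCont_Phi]) auto
  then have "(h \<longlongrightarrow> F2sided_limit c \<theta>) (at_right c)"
    unfolding isCont_def h_def F2sided_limit_def by (auto intro: tendsto_mono at_le)
  moreover have "eventually (\<lambda>x. h x = F2sided x \<theta> c) (at_right c)"
    using eventually_at_right_less[of c] by eventually_elim (simp add: h_def F2sided_above_c assms)
  ultimately show ?thesis
    by (simp add: tendsto_cong[symmetric])
qed

theorem mainTheorem5:
  fixes c p :: real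
  assumes c_pos: "c > 0"
    and p_range: "0 < p" "p < 1"
    and bij_assm: "\<forall>xobs > c.
         continuous_on UNIV (\<lambda>\<theta>. F2sided xobs \<theta> c)
       \<and> (\<forall>\<theta>1 \<theta>2. \<theta>1 < \<theta>2 \<longrightarrow> F2sided xobs \<theta>2 c < F2sided xobs \<theta>1 c)
       \<and> range (\<lambda>\<theta>. F2sided xobs \<theta> c) = {0<..<1}"
  shows "(\<exists>!\<theta>. p = Phi (-c - \<theta>) / (Phi (-c - \<theta>) + Phi (-c + \<theta>)))
    \<and> ((\<lambda>xobs. theta2sided xobs c p) \<longlongrightarrow>
          (THE \<theta>. p = Phi (-c - \<theta>) / (Phi (-c - \<theta>) + Phi (-c + \<theta>)))) (at_right c)
    \<and> (p = 1/2 \<longrightarrow>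
          (THE \<theta>. p = Phi (-c - \<theta>) / (Phi (-c - \<theta>) + Phi (-c + \<theta>))) = 0)"
proof -
  obtain \<theta>\<^sub>0 where root: "F2sided_limit c \<theta>\<^sub>0 = p"
    using F2sided_limit_root_exists p_range by blast
  have unique: "\<theta> = \<theta>\<^sub>0" if "p = F2sided_limit c \<theta>" for \<theta>
    using that root F2sided_limit_strict_antimono[of \<theta> \<theta>\<^sub>0 c] F2sided_limit_strict_antimono[of \<theta>\<^sub>0 \<theta> c]
    by (cases \<theta> \<theta>\<^sub>0 rule: linorder_cases) auto
  have the_root: "(THE \<theta>. p = F2sided_limit c \<theta>) = \<theta>\<^sub>0"
    using root unique by blast
  have decreasing: "F2sided x t c < F2sided x s c" if "c < x" "s < t" for x s t
    using bij_assm that by blast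
  have attained: "p \<in> range (\<lambda>\<theta>. F2sided x \<theta> c)" if "c < x" for x
    using bij_assm that p_range by auto
  have "eventually (\<lambda>x. antimono (\<lambda>\<theta>. F2sided x \<theta> c)) (at_right c)"
    using eventually_at_right_less[of c]
    by eventually_elim (intro antimonoI, metis decreasing dual_order.order_iff_strict)
  moreover have "eventually (\<lambda>x. F2sided x (theta2sided x c p) c = p) (at_right c)"
    using eventually_at_right_less[of c] unfolding theta2sided_def
    by eventually_elim (rule the_root_of_strictly_decreasing[OF decreasing attained])
  ultimately have "((\<lambda>x. theta2sided x c p) \<longlongrightarrow> \<theta>\<^sub>0) (at_right c)"
    using F2sided_tendsto_F2sided_limit[OF c_pos] F2sided_limit_strict_antimono root
    by (rule tendsto_root_of_pointwise_convergence)
  moreover have "\<theta>\<^sub>0 = 0" if "p = 1/2"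
    using unique[of 0] F2sided_limit_zero that by simp
  ultimately show ?thesis
    unfolding F2sided_limit_def[symmetric] the_root using root unique by blast
qed

end
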